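(* Let $d_1,\dots,d_n\ge1$, $\Delta=\Delta^{d_1}\times\cdots\times\Delta^{d_n}$, $N=\sum_i d_i$, and $f:\operatorname{vert}(\Delta)\to\mathbb{R}$. For $\boldsymbol{j}\in\mathcal{G}=\prod_i\{0,\dots,d_i\}$ let $\alpha(\boldsymbol{j})=f(\boldsymbol{v}_{1j_1},\dots,\boldsymbol{v}_{nj_n})$, and for $\pi\in\Pi$ with point representation $\boldsymbol{j}^0,\dots,\boldsymbol{j}^N$ let $f^\pi(\boldsymbol{z})=\alpha(\boldsymbol{j}^0)+\sum_{t\in[N]}(\alpha(\boldsymbol{j}^t)-\alpha(\boldsymbol{j}^{t-1}))z_{\pi_t}$. If $f$ is supermodular, then $$\operatorname{conv}\{(\boldsymbol{z},\mu)\in\operatorname{vert}(\Delta)\times\mathbb{R}:\mu\le f(\boldsymbol{z})\}=\{(\boldsymbol{z},\mu)\in\Delta\times\mathbb{R}:\mu\le f^\pi(\boldsymbol{z})\ \forall\pi\in\Pi\}.$$ If $f$ is submodular, then $\operatorname{conv}\{(\boldsymbol{z},\mu)\in\operatorname{vert}(\Delta)\times\mathbb{R}:\mu\ge f(\boldsymbol{z})\}=\{(\boldsymbol{z},\mu)\in\Delta\times\mathbb{R}:\mu\ge f^\pi(\boldsymbol{z})\ \forall\pi\in\Pi\}$.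
   Context: $\Delta^d=\{\boldsymbol{z}\in\mathbb{R}^d:1\ge z_1\ge\cdots\ge z_d\ge0\}$; variables $\boldsymbol{z}=(\boldsymbol{z}_1,\dots,\boldsymbol{z}_n)$, $\boldsymbol{z}_i=(z_{i1},\dots,z_{id_i})$. Vertices of $\Delta^{d_i}$: $\boldsymbol{v}_{i0}=\boldsymbol{0}$, $\boldsymbol{v}_{ij}$ = vector with first $j$ coordinates $1$ and the rest $0$; $\operatorname{vert}(\Delta)=\prod_i\{\boldsymbol{v}_{i0},\dots,\boldsymbol{v}_{id_i}\}$. Super/submodularity of $f$ is with respect to componentwise max/min on $\operatorname{vert}(\Delta)$ ($f(\boldsymbol{u}\vee\boldsymbol{w})+f(\boldsymbol{u}\wedge\boldsymbol{w})\ge f(\boldsymbol{u})+f(\boldsymbol{w})$ for supermodular, $\le$ for submodular). Staircase: $\pi=(\pi_1,\dots,\pi_N)$, $\pi_t=(\pi_t(1),\pi_t(2))$, $\pi_t(1)\in[n]$ occurring exactly $d_i$ times for each $i$, $\pi_t(2)=|\{s\le t:\pi_s(1)=\pi_t(1)\}|$; $\Pi$ the set of staircases; $z_{\pi_t}=z_{\pi_t(1),\pi_t(2)}$; point representation $\boldsymbol{j}^0=\boldsymbol{0}$, $\boldsymbol{j}^t=\boldsymbol{j}^{t-1}+\boldsymbol{e}_{\pi_t(1)}$. *)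

theory Defs
  imports "HOL-Analysis.Analysis" "HOL-Library.Function_Algebras"
begin

text \<open>Pointwise real vector space structure on functions (needed to use the
library's convex hull on points indexed by pairs (i,k)).\<close>

instantiation "fun" :: (type, real_vector) real_vector
begin
definition scaleR_fun :: "real \<Rightarrow> ('a \<Rightarrow> 'b) \<Rightarrow> 'a \<Rightarrow> 'b"
  where "scaleR_fun r f = (\<lambda>x. r *\<^sub>R f x)"
instance
  by standard (auto simp: scaleR_fun_def fun_eq_iff plus_fun_def scaleR_add_right scaleR_add_left)
end

text \<open>A point z = (z_1,...,z_n) with z_i \<in> R^{d_i} is encoded as a function
  z :: nat \<times> nat \<Rightarrow> real, z(i,k) = z_{i+1,k} for i < n and 1 \<le> k \<le> d i
  (blocks are indexed 0..n-1), and z(i,k) = 0 for all other index pairs.\<close>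

definition coords :: "nat \<Rightarrow> (nat \<Rightarrow> nat) \<Rightarrow> (nat \<times> nat) set" where
  "coords n d = {(i,k). i < n \<and> 1 \<le> k \<and> k \<le> d i}"

definition Delta :: "nat \<Rightarrow> (nat \<Rightarrow> nat) \<Rightarrow> (nat \<times> nat \<Rightarrow> real) set" where
  "Delta n d = {z. (\<forall>p. p \<notin> coords n d \<longrightarrow> z p = 0) \<and>
     (\<forall>i<n. 1 \<ge> z (i,1) \<and> (\<forall>k. 1 \<le> k \<and> k < d i \<longrightarrow> z (i,k) \<ge> z (i,Suc k)) \<and> z (i, d i) \<ge> 0)}"

definition grid :: "nat \<Rightarrow> (nat \<Rightarrow> nat) \<Rightarrow> (nat \<Rightarrow> nat) set" where
  "grid n d = {j. (\<forall>i<n. j i \<le> d i) \<and> (\<forall>i\<ge>n. j i = 0)}"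

definition vtx :: "nat \<Rightarrow> (nat \<Rightarrow> nat) \<Rightarrow> (nat \<Rightarrow> nat) \<Rightarrow> (nat \<times> nat \<Rightarrow> real)" where
  "vtx n d j = (\<lambda>(i,k). if (i,k) \<in> coords n d \<and> k \<le> j i then 1 else 0)"

definition vert :: "nat \<Rightarrow> (nat \<Rightarrow> nat) \<Rightarrow> (nat \<times> nat \<Rightarrow> real) set" where
  "vert n d = vtx n d ` grid n d"

definition supermodular_on_vert :: "nat \<Rightarrow> (nat \<Rightarrow> nat) \<Rightarrow> ((nat \<times> nat \<Rightarrow> real) \<Rightarrow> real) \<Rightarrow> bool" where
  "supermodular_on_vert n d f = (\<forall>u\<in>vert n d. \<forall>w\<in>vert n d.
      f (sup u w) + f (inf u w) \<ge> f u + f w)"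

definition submodular_on_vert :: "nat \<Rightarrow> (nat \<Rightarrow> nat) \<Rightarrow> ((nat \<times> nat \<Rightarrow> real) \<Rightarrow> real) \<Rightarrow> bool" where
  "submodular_on_vert n d f = (\<forall>u\<in>vert n d. \<forall>w\<in>vert n d.
      f (sup u w) + f (inf u w) \<le> f u + f w)"

text \<open>Staircases: the sequence of first components pi_1(1), ..., pi_N(1), as a list
  of block indices (0-based) in which block i occurs exactly d i times.\<close>
definition staircases :: "nat \<Rightarrow> (nat \<Rightarrow> nat) \<Rightarrow> nat list set" where
  "staircases n d = {p. set p \<subseteq> {..<n} \<and> (\<forall>i<n. count_list p i = d i)}"

text \<open>Point representation j^t (t = 0..N): j^t(i) = number of occurrences of i among
  the first t entries. The second component pi_t(2) equals j^t(pi_t(1)).\<close>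
definition jpt :: "nat list \<Rightarrow> nat \<Rightarrow> nat \<Rightarrow> nat" where
  "jpt p t = (\<lambda>i. count_list (take t p) i)"

definition alpha :: "nat \<Rightarrow> (nat \<Rightarrow> nat) \<Rightarrow> ((nat \<times> nat \<Rightarrow> real) \<Rightarrow> real) \<Rightarrow> (nat \<Rightarrow> nat) \<Rightarrow> real" where
  "alpha n d f j = f (vtx n d j)"

definition fpi :: "nat \<Rightarrow> (nat \<Rightarrow> nat) \<Rightarrow> ((nat \<times> nat \<Rightarrow> real) \<Rightarrow> real) \<Rightarrow> nat list
    \<Rightarrow> (nat \<times> nat \<Rightarrow> real) \<Rightarrow> real" where
  "fpi n d f p z = alpha n d f (jpt p 0) +
     (\<Sum>t\<in>{1..length p}. (alpha n d f (jpt p t) - alpha n d f (jpt p (t - 1))) *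
        z (p ! (t - 1), jpt p t (p ! (t - 1))))"

end

theory Submission
  imports Defs
begin

text \<open>
  For supermodular f every f^pi lies above f on the vertices: walking from 0 to a vertex v(j)
  along the chain min(j, j^t), t = 0..N, supermodularity bounds each increment of alpha by the
  corresponding term of f^pi. As the right-hand side is convex, it contains the hull.
  Conversely, for z in Delta choose greedily a staircase with z(pi_1) >= ... >= z(pi_N). Then z
  is the convex combination of v(j^0), ..., v(j^N) with weights z(pi_t) - z(pi_(t+1)), and by
  Abel summation the same weights applied to alpha(j^t) give f^pi(z); so (z, f^pi(z)) and every
  point below it lie in the hull. The submodular case is the supermodular one for -f.
\<close>

lemma sum_fun_apply: "sum f A x = (\<Sum>a\<in>A. f a x)"
  by (induction A rule: infinite_finite_induct) auto

lemma sum_scaleR_indicator: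
  fixes z :: "'a \<Rightarrow> real"
  assumes "finite A" "\<And>x. x \<notin> A \<Longrightarrow> z x = 0"
  shows "(\<Sum>q\<in>A. z q *\<^sub>R indicator {q}) = z"
proof
  fix x
  show "(\<Sum>q\<in>A. z q *\<^sub>R indicator {q}) x = z x"
    using assms by (cases "x \<in> A") (simp_all add: sum_fun_apply scaleR_fun_def indicator_def)
qed

lemma summation_by_parts_atMost:
  fixes y :: "nat \<Rightarrow> 'a::real_vector"
  shows "(\<Sum>t\<le>N. (w t - w (Suc t)) *\<^sub>R y t)
    = w 0 *\<^sub>R y 0 + (\<Sum>t<N. w (Suc t) *\<^sub>R (y (Suc t) - y t)) - w (Suc N) *\<^sub>R y N"
  by (induction N) (simp_all add: algebra_simps)

lemma convex_hull_down_closed: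
  fixes S :: "('a::real_vector \<times> real) set"
  assumes x: "(x, \<mu>) \<in> convex hull S" and "\<nu> \<le> \<mu>"
    and down: "\<And>x \<mu> \<nu>. (x, \<mu>) \<in> S \<Longrightarrow> \<nu> \<le> \<mu> \<Longrightarrow> (x, \<nu>) \<in> S"
  shows "(x, \<nu>) \<in> convex hull S"
proof -
  let ?shift = "(0, \<nu> - \<mu>) :: 'a \<times> real"
  have "?shift + s \<in> S" if "s \<in> S" for s
    using down[of "fst s" "snd s" "\<nu> - \<mu> + snd s"] that \<open>\<nu> \<le> \<mu>\<close> by (cases s) simp
  then have "(+) ?shift ` S \<subseteq> S"
    by blast
  then have "(+) ?shift ` (convex hull S) \<subseteq> convex hull S"
    using hull_mono[of "(+) ?shift ` S" S convex] by (simp add: convex_hull_translation)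
  moreover have "?shift + (x, \<mu>) \<in> (+) ?shift ` (convex hull S)"
    using x by (rule imageI)
  ultimately show ?thesis
    by auto
qed

lemma image_negate_snd:
  "(\<lambda>(z, \<mu>). (z, - \<mu>)) ` {(z, \<mu>). P z \<mu>} = {(z, \<mu> :: real). P z (- \<mu>)}"
proof
  show "(\<lambda>(z, \<mu>). (z, - \<mu>)) ` {(z, \<mu>). P z \<mu>} \<subseteq> {(z, \<mu>). P z (- \<mu>)}"
    by auto
  show "{(z, \<mu>). P z (- \<mu>)} \<subseteq> (\<lambda>(z, \<mu>). (z, - \<mu>)) ` {(z, \<mu>). P z \<mu>}"
  proof clarify
    fix z \<mu>
    assume "P z (- \<mu>)"
    then show "(z, \<mu>) \<in> (\<lambda>(z, \<mu>). (z, - \<mu>)) ` {(z, \<mu>). P z \<mu>}"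
      by (intro image_eqI[where x = "(z, - \<mu>)"]) auto
  qed
qed

lemma linear_negate_snd: "linear (\<lambda>(z, \<mu>). (z :: 'a::real_vector, - \<mu> :: real))"
  by (rule linearI) (auto simp: case_prod_beta)

text \<open>step_coord p t is the paper's pi_(t+1), steps being counted from 0.\<close>

definition step_coord :: "nat list \<Rightarrow> nat \<Rightarrow> nat \<times> nat" where
  "step_coord p t = (p ! t, jpt p (Suc t) (p ! t))"

lemma jpt_0 [simp]: "jpt p 0 = (\<lambda>_. 0)"
  by (simp add: jpt_def fun_eq_iff)

lemma jpt_Suc: "t < length p \<Longrightarrow> jpt p (Suc t) = (jpt p t)(p ! t := Suc (jpt p t (p ! t)))"
  by (auto simp: jpt_def take_Suc_conv_app_nth fun_eq_iff)

lemma jpt_mono: "t \<le> t' \<Longrightarrow> jpt p t i \<le> jpt p t' i"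
  unfolding jpt_def by (metis count_list_append le_add1 le_add_diff_inverse take_add)

lemma jpt_length: "jpt p (length p) = count_list p"
  by (simp add: jpt_def fun_eq_iff)

lemma jpt_append: "t \<le> length p \<Longrightarrow> jpt (p @ q) t = jpt p t"
  by (simp add: jpt_def fun_eq_iff)

lemma jpt_in_grid:
  assumes "p \<in> staircases n d"
  shows "jpt p t \<in> grid n d"
  unfolding grid_def
proof (intro CollectI conjI allI impI)
  have le_count: "jpt p t i \<le> count_list p i" for i
    using jpt_mono[of t "t + length p" p i] by (simp add: jpt_def)
  fix i
  show "jpt p t i \<le> d i" if "i < n"
    using assms that le_count[of i] by (simp add: staircases_def)
  show "jpt p t i = 0" if "n \<le> i"
  proof -
    have "i \<notin> set p"
      using assms that by (auto simp: staircases_def)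
    then show ?thesis
      using le_count[of i] by (simp add: count_list_0_iff)
  qed
qed

lemma step_coord_append: "t < length p \<Longrightarrow> step_coord (p @ q) t = step_coord p t"
  by (simp add: step_coord_def jpt_append nth_append)

lemma step_coord_in_coords:
  assumes "p \<in> staircases n d" "t < length p"
  shows "step_coord p t \<in> coords n d"
proof -
  have "p ! t < n"
    using assms(1) nth_mem[OF assms(2)] by (auto simp: staircases_def)
  moreover have "jpt p (Suc t) (p ! t) \<le> d (p ! t)"
    using jpt_in_grid[OF assms(1)] calculation by (auto simp: grid_def)
  ultimately show ?thesis
    using jpt_Suc[OF assms(2)] by (simp add: step_coord_def coords_def)
qed

lemma step_coord_last:
  assumes "p \<in> staircases n d" "p \<noteq> []"
  shows "step_coord p (length p - 1) = (last p, d (last p))"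
proof -
  have "last p < n"
    using assms(1) last_in_set[OF assms(2)] by (auto simp: staircases_def)
  then show ?thesis
    using assms by (simp add: step_coord_def jpt_length last_conv_nth staircases_def)
qed

lemma coords_eq_Sigma: "coords n d = (SIGMA i:{..<n}. {1..d i})"
  by (auto simp: coords_def)

lemma length_staircase: "p \<in> staircases n d \<Longrightarrow> length p = (\<Sum>i<n. d i)"
  using sum_count_set[of p "{..<n}"] by (simp add: staircases_def)

lemma step_coord_neq:
  assumes "s < t" "t < length p"
  shows "step_coord p s \<noteq> step_coord p t"
proof
  assume eq: "step_coord p s = step_coord p t"
  then have "p ! s = p ! t"
    by (simp add: step_coord_def)
  have "jpt p (Suc s) (p ! t) \<le> jpt p t (p ! t)"
    using jpt_mono assms(1) by simp
  also have "\<dots> < jpt p (Suc t) (p ! t)"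
    using jpt_Suc[OF assms(2)] by simp
  finally show False
    using eq \<open>p ! s = p ! t\<close> by (simp add: step_coord_def)
qed

lemma bij_betw_step_coord:
  assumes "p \<in> staircases n d"
  shows "bij_betw (step_coord p) {..<length p} (coords n d)"
proof -
  have inj: "inj_on (step_coord p) {..<length p}"
    by (intro inj_onI) (metis lessThan_iff linorder_neqE_nat step_coord_neq)
  have "step_coord p ` {..<length p} = coords n d"
  proof (rule card_subset_eq)
    show "finite (coords n d)"
      by (simp add: coords_eq_Sigma)
    show "step_coord p ` {..<length p} \<subseteq> coords n d"
      using step_coord_in_coords[OF assms] by auto
    show "card (step_coord p ` {..<length p}) = card (coords n d)"
      using card_image[OF inj] length_staircase[OF assms] by (simp add: coords_eq_Sigma card_SigmaI)
  qed
  with inj show ?thesis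
    by (simp add: bij_betw_def)
qed

lemma vtx_sup: "sup (vtx n d j) (vtx n d j') = vtx n d (\<lambda>i. max (j i) (j' i))"
  by (auto simp: vtx_def fun_eq_iff sup_max)

lemma vtx_inf: "inf (vtx n d j) (vtx n d j') = vtx n d (\<lambda>i. min (j i) (j' i))"
  by (auto simp: vtx_def fun_eq_iff inf_min)

lemma vtx_in_Delta: "vtx n d j \<in> Delta n d"
  by (auto simp: vtx_def Delta_def coords_def)

lemma vtx_zero: "vtx n d (\<lambda>_. 0) = 0"
  by (auto simp: vtx_def coords_def fun_eq_iff)

lemma vtx_jpt_Suc_diff:
  assumes "p \<in> staircases n d" "t < length p"
  shows "vtx n d (jpt p (Suc t)) - vtx n d (jpt p t) = indicator {step_coord p t}"
  using step_coord_in_coords[OF assms] jpt_Suc[OF assms(2)]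
  by (auto simp: fun_eq_iff vtx_def step_coord_def indicator_def)

lemma Delta_antimono:
  assumes "z \<in> Delta n d" "i < n" "1 \<le> k" "k \<le> k'" "k' \<le> d i"
  shows "z (i, k') \<le> z (i, k)"
  using assms(4,5)
proof (induction k' rule: dec_induct)
  case (step m)
  have "z (i, Suc m) \<le> z (i, m)"
    using assms(1-3) step(1,2,4) unfolding Delta_def by simp
  with step show ?case
    by simp
qed simp

lemma Delta_bounds:
  assumes "z \<in> Delta n d" "q \<in> coords n d"
  shows "0 \<le> z q \<and> z q \<le> 1"
proof -
  obtain i k where q: "q = (i, k)" "i < n" "1 \<le> k" "k \<le> d i"
    using assms(2) by (auto simp: coords_def)
  then have "z (i, d i) \<le> z (i, k)" "z (i, k) \<le> z (i, 1)"
    using Delta_antimono[OF assms(1)] by auto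
  moreover have "0 \<le> z (i, d i)" "z (i, 1) \<le> 1"
    using assms(1) q(2) by (simp_all add: Delta_def)
  ultimately show ?thesis
    unfolding q(1) by linarith
qed

lemma convex_Delta: "convex (Delta n d)"
  unfolding convex_def Delta_def
  by (auto simp: scaleR_fun_def
      intro!: convex_bound_le add_mono mult_left_mono add_nonneg_nonneg mult_nonneg_nonneg)

lemma fpi_eq_sum_lessThan:
  "fpi n d f p z = alpha n d f (jpt p 0) +
     (\<Sum>t<length p. (alpha n d f (jpt p (Suc t)) - alpha n d f (jpt p t)) * z (step_coord p t))"
  by (simp add: fpi_def step_coord_def sum.atLeast1_atMost_eq del: jpt_0)

lemma fpi_affine:
  assumes "u + v = 1"
  shows "fpi n d f p (u *\<^sub>R x + v *\<^sub>R y) = u * fpi n d f p x + v * fpi n d f p y"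
proof -
  let ?a = "\<lambda>t. alpha n d f (jpt p (Suc t)) - alpha n d f (jpt p t)"
  have eval: "(u *\<^sub>R x + v *\<^sub>R y) q = u * x q + v * y q" for q
    by (simp add: scaleR_fun_def)
  have split: "(\<Sum>t<length p. ?a t * (u * x (step_coord p t) + v * y (step_coord p t))) =
      u * (\<Sum>t<length p. ?a t * x (step_coord p t)) + v * (\<Sum>t<length p. ?a t * y (step_coord p t))"
    by (simp add: sum_distrib_left distrib_left mult.left_commute sum.distrib)
  have "alpha n d f (jpt p 0) = u * alpha n d f (jpt p 0) + v * alpha n d f (jpt p 0)"
    using assms by (metis distrib_right mult_1)
  then show ?thesis
    unfolding fpi_eq_sum_lessThan eval split unfolding distrib_left by linarith
qed

lemma fpi_uminus: "fpi n d (\<lambda>x. - f x) p z = - fpi n d f p z"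
  by (simp add: fpi_def alpha_def sum_negf[symmetric] algebra_simps)

lemma convex_fpi_hypograph:
  "convex {(z, \<mu>). z \<in> Delta n d \<and> (\<forall>p\<in>P. \<mu> \<le> fpi n d f p z)}"
proof (rule convexI)
  fix a b :: "(nat \<times> nat \<Rightarrow> real) \<times> real" and u v :: real
  assume a: "a \<in> {(z, \<mu>). z \<in> Delta n d \<and> (\<forall>p\<in>P. \<mu> \<le> fpi n d f p z)}"
    and b: "b \<in> {(z, \<mu>). z \<in> Delta n d \<and> (\<forall>p\<in>P. \<mu> \<le> fpi n d f p z)}"
    and uv: "0 \<le> u" "0 \<le> v" "u + v = 1"
  obtain x \<mu> y \<nu> where ab: "a = (x, \<mu>)" "b = (y, \<nu>)"
    by fastforce
  have "u *\<^sub>R x + v *\<^sub>R y \<in> Delta n d"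
    using a b ab by (intro convexD[OF convex_Delta _ _ uv]) auto
  moreover have "u * \<mu> + v * \<nu> \<le> fpi n d f p (u *\<^sub>R x + v *\<^sub>R y)" if "p \<in> P" for p
  proof -
    have "\<mu> \<le> fpi n d f p x" "\<nu> \<le> fpi n d f p y"
      using a b ab that by auto
    then have "u * \<mu> + v * \<nu> \<le> u * fpi n d f p x + v * fpi n d f p y"
      using uv by (intro add_mono mult_left_mono)
    then show ?thesis
      by (simp add: fpi_affine[OF uv(3)])
  qed
  ultimately show "u *\<^sub>R a + v *\<^sub>R b \<in> {(z, \<mu>). z \<in> Delta n d \<and> (\<forall>p\<in>P. \<mu> \<le> fpi n d f p z)}"
    by (simp add: ab)
qed

lemma supermodular_on_vertD:
  assumes "supermodular_on_vert n d f" "j \<in> grid n d" "j' \<in> grid n d"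
  shows "f (vtx n d j) + f (vtx n d j')
    \<le> f (vtx n d (\<lambda>i. max (j i) (j' i))) + f (vtx n d (\<lambda>i. min (j i) (j' i)))"
  using assms unfolding supermodular_on_vert_def vert_def by (auto simp: vtx_sup vtx_inf)

lemma supermodular_chain_step:
  assumes sm: "supermodular_on_vert n d f" and p: "p \<in> staircases n d"
    and j: "j \<in> grid n d" and t: "t < length p"
  defines "M \<equiv> \<lambda>t i. min (j i) (jpt p t i)"
  shows "alpha n d f (M (Suc t)) - alpha n d f (M t)
    \<le> (alpha n d f (jpt p (Suc t)) - alpha n d f (jpt p t)) * vtx n d j (step_coord p t)"
proof -
  let ?J = "jpt p"
  define i where "i = p ! t"
  have J_Suc: "?J (Suc t) = (?J t)(i := Suc (?J t i))"
    using jpt_Suc[OF t] by (simp add: i_def)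
  have coord: "(i, Suc (?J t i)) \<in> coords n d"
    using step_coord_in_coords[OF p t] J_Suc by (simp add: step_coord_def i_def)
  (* While block i is below j i, j^t and min(j, j^(t+1)) have join j^(t+1) and meet
     min(j, j^t); afterwards the chain min(j, j^t) no longer moves. *)
  show ?thesis
  proof (cases "?J t i < j i")
    case True
    have "M (Suc t) \<in> grid n d"
      using j by (auto simp: grid_def M_def)
    then have "f (vtx n d (?J t)) + f (vtx n d (M (Suc t)))
        \<le> f (vtx n d (\<lambda>x. max (?J t x) (M (Suc t) x))) + f (vtx n d (\<lambda>x. min (?J t x) (M (Suc t) x)))"
      using supermodular_on_vertD[OF sm jpt_in_grid[OF p]] by blast
    also have "(\<lambda>x. max (?J t x) (M (Suc t) x)) = ?J (Suc t)"
      using True J_Suc by (auto simp: M_def fun_eq_iff)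
    also have "(\<lambda>x. min (?J t x) (M (Suc t) x)) = M t"
      using True J_Suc by (auto simp: M_def fun_eq_iff)
    finally show ?thesis
      using True coord J_Suc by (simp add: alpha_def vtx_def step_coord_def i_def)
  next
    case False
    then have "M (Suc t) = M t"
      using J_Suc by (auto simp: M_def fun_eq_iff)
    moreover have "vtx n d j (step_coord p t) = 0"
      using False J_Suc by (simp add: vtx_def step_coord_def i_def)
    ultimately show ?thesis
      by simp
  qed
qed

lemma supermodular_le_fpi:
  assumes sm: "supermodular_on_vert n d f" and p: "p \<in> staircases n d" and j: "j \<in> grid n d"
  shows "f (vtx n d j) \<le> fpi n d f p (vtx n d j)"
proof -
  let ?a = "alpha n d f" and ?J = "jpt p"
  define M where "M = (\<lambda>t i. min (j i) (?J t i))"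
  have "M (length p) i = j i" for i
    using j p by (cases "i < n") (auto simp: M_def jpt_length grid_def staircases_def)
  then have "M (length p) = j" ..
  moreover have "M 0 = ?J 0"
    by (simp add: M_def fun_eq_iff)
  ultimately have "f (vtx n d j) - ?a (?J 0) = (\<Sum>t<length p. ?a (M (Suc t)) - ?a (M t))"
    using sum_lessThan_telescope[of "\<lambda>t. ?a (M t)" "length p"] by (simp add: alpha_def)
  also have "\<dots> \<le> (\<Sum>t<length p. (?a (?J (Suc t)) - ?a (?J t)) * vtx n d j (step_coord p t))"
    using supermodular_chain_step[OF sm p j] by (intro sum_mono) (simp add: M_def)
  finally show ?thesis
    by (simp add: fpi_eq_sum_lessThan)
qed

definition nonincreasing_along :: "(nat \<times> nat \<Rightarrow> real) \<Rightarrow> nat list \<Rightarrow> bool" where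
  "nonincreasing_along z p \<longleftrightarrow>
     (\<forall>t. Suc t < length p \<longrightarrow> z (step_coord p (Suc t)) \<le> z (step_coord p t))"

lemma staircase_snoc:
  assumes "p \<in> staircases n (d(i := d i - 1))" "i < n" "1 \<le> d i"
  shows "p @ [i] \<in> staircases n d"
  using assms by (auto simp: staircases_def)

lemma nonincreasing_along_snocI:
  assumes "nonincreasing_along z p"
    and "p \<noteq> [] \<Longrightarrow> z (step_coord (p @ [i]) (length p)) \<le> z (step_coord p (length p - 1))"
  shows "nonincreasing_along z (p @ [i])"
  unfolding nonincreasing_along_def
proof (intro allI impI)
  fix t
  assume t: "Suc t < length (p @ [i])"
  show "z (step_coord (p @ [i]) (Suc t)) \<le> z (step_coord (p @ [i]) t)"
  proof (cases "Suc t < length p")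
    case True
    then show ?thesis
      using assms(1) by (simp add: nonincreasing_along_def step_coord_append)
  next
    case False
    then have last: "Suc t = length p" and "p \<noteq> []"
      using t by auto
    then show ?thesis
      using assms(2) step_coord_append[of t p "[i]"] by (simp flip: last)
  qed
qed

lemma exists_nonincreasing_staircase:
  assumes "\<And>i k. i < n \<Longrightarrow> 1 \<le> k \<Longrightarrow> k < d i \<Longrightarrow> z (i, Suc k) \<le> z (i, k)"
  shows "\<exists>p\<in>staircases n d. nonincreasing_along z p"
  using assms
proof (induction "\<Sum>i<n. d i" arbitrary: d)
  case 0
  then have "[] \<in> staircases n d"
    by (simp add: staircases_def)
  then show ?case
    by (auto simp: nonincreasing_along_def intro: bexI[of _ "[]"])
next
  case (Suc s)
  (* The last step goes to the nonempty block whose last coordinate z(i, d i) is smallest. *)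
  define S where "S = {i. i < n \<and> 1 \<le> d i}"
  have "S \<noteq> {}"
  proof
    assume "S = {}"
    then have "\<And>i. i \<in> {..<n} \<Longrightarrow> d i = 0"
      by (auto simp: S_def)
    then show False
      using Suc.hyps(2) by simp
  qed
  moreover have "finite S"
    by (simp add: S_def)
  ultimately obtain i0 where "is_arg_min (\<lambda>i. z (i, d i)) (\<lambda>i. i \<in> S) i0"
    using ex_is_arg_min_if_finite by blast
  then have i0: "i0 \<in> S" and least: "\<And>i. i \<in> S \<Longrightarrow> z (i0, d i0) \<le> z (i, d i)"
    by (simp_all add: is_arg_min_linorder)
  define d' where "d' = d(i0 := d i0 - 1)"
  have i0_bounds: "i0 < n" "1 \<le> d i0"
    using i0 by (simp_all add: S_def)
  have "(\<Sum>i<n. d i) = d i0 + (\<Sum>i\<in>{..<n} - {i0}. d i)"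
    using i0_bounds by (simp add: sum.remove)
  also have "(\<Sum>i\<in>{..<n} - {i0}. d i) = (\<Sum>i\<in>{..<n} - {i0}. d' i)"
    by (intro sum.cong) (auto simp: d'_def)
  also have "d i0 + \<dots> = Suc (\<Sum>i<n. d' i)"
    using i0_bounds by (simp add: sum.remove d'_def)
  finally have "s = (\<Sum>i<n. d' i)"
    using Suc.hyps(2) by simp
  moreover have "z (i, Suc k) \<le> z (i, k)" if "i < n" "1 \<le> k" "k < d' i" for i k
    using Suc.prems[of i k] that by (auto simp: d'_def split: if_splits)
  ultimately obtain p where p: "p \<in> staircases n d'" "nonincreasing_along z p"
    using Suc.hyps(1) by blast
  have snoc: "p @ [i0] \<in> staircases n d"
    using staircase_snoc p(1) i0 by (simp add: S_def d'_def)
  have "z (i0, d i0) \<le> z (step_coord p (length p - 1))" if "p \<noteq> []"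
  proof -
    define i where "i = last p"
    have "i \<in> set p"
      using that by (simp add: i_def)
    then have "i < n" "count_list p i \<noteq> 0"
      using p(1) by (auto simp: staircases_def count_list_0_iff)
    then have "1 \<le> d' i"
      using p(1) by (simp add: staircases_def)
    have "z (i0, d i0) \<le> z (i, d' i)"
    proof (cases "i = i0")
      case True
      then show ?thesis
        using Suc.prems[of i0 "d' i0"] \<open>1 \<le> d' i\<close> i0 by (simp add: S_def d'_def)
    next
      case False
      then show ?thesis
        using least[of i] \<open>i < n\<close> \<open>1 \<le> d' i\<close> by (simp add: S_def d'_def)
    qed
    then show ?thesis
      using step_coord_last[OF p(1) that] by (simp add: i_def)
  qed
  moreover have "step_coord (p @ [i0]) (length p) = (i0, d i0)"
    using step_coord_last[OF snoc] by simp
  ultimately have "nonincreasing_along z (p @ [i0])"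
    using p(2) by (intro nonincreasing_along_snocI) simp_all
  with snoc show ?case
    by blast
qed

definition staircase_weight :: "(nat \<times> nat \<Rightarrow> real) \<Rightarrow> nat list \<Rightarrow> nat \<Rightarrow> real" where
  "staircase_weight z p t = (if t = 0 then 1 else if t \<le> length p then z (step_coord p (t - 1)) else 0)"

lemma staircase_combination:
  assumes p: "p \<in> staircases n d" and z: "\<And>q. q \<notin> coords n d \<Longrightarrow> z q = 0"
  defines "w \<equiv> staircase_weight z p"
  shows "(\<Sum>t\<le>length p. (w t - w (Suc t)) *\<^sub>R (vtx n d (jpt p t), alpha n d f (jpt p t)))
    = (z, fpi n d f p z)"
proof -
  let ?y = "\<lambda>t. (vtx n d (jpt p t), alpha n d f (jpt p t))"
  have "(\<Sum>t\<le>length p. (w t - w (Suc t)) *\<^sub>R ?y t)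
      = w 0 *\<^sub>R ?y 0 + (\<Sum>t<length p. w (Suc t) *\<^sub>R (?y (Suc t) - ?y t))
        - w (Suc (length p)) *\<^sub>R ?y (length p)"
    by (rule summation_by_parts_atMost)
  also have "\<dots> = ?y 0 + (\<Sum>t<length p. z (step_coord p t) *\<^sub>R (?y (Suc t) - ?y t))"
  proof -
    have "w (Suc t) = z (step_coord p t)" if "t < length p" for t
      using that by (simp add: w_def staircase_weight_def)
    then have "(\<Sum>t<length p. w (Suc t) *\<^sub>R (?y (Suc t) - ?y t))
        = (\<Sum>t<length p. z (step_coord p t) *\<^sub>R (?y (Suc t) - ?y t))"
      by (intro sum.cong) simp_all
    moreover have "w 0 = 1" "w (Suc (length p)) = 0"
      by (simp_all add: w_def staircase_weight_def)
    ultimately show ?thesis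
      by (simp add: zero_prod_def)
  qed
  also have "\<dots> = (z, fpi n d f p z)"
  proof (rule prod_eqI)
    have "(\<Sum>t<length p. z (step_coord p t) *\<^sub>R (vtx n d (jpt p (Suc t)) - vtx n d (jpt p t)))
        = (\<Sum>t<length p. z (step_coord p t) *\<^sub>R indicator {step_coord p t})"
      using vtx_jpt_Suc_diff[OF p] by simp
    also have "\<dots> = (\<Sum>q\<in>coords n d. z q *\<^sub>R indicator {q})"
      by (rule sum.reindex_bij_betw[OF bij_betw_step_coord[OF p]])
    also have "\<dots> = z"
      by (rule sum_scaleR_indicator) (simp_all add: coords_eq_Sigma z)
    finally show "fst (?y 0 + (\<Sum>t<length p. z (step_coord p t) *\<^sub>R (?y (Suc t) - ?y t))) = fst (z, fpi n d f p z)"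
      by (simp add: fst_sum vtx_zero del: jpt_0) (simp add: vtx_zero)
    show "snd (?y 0 + (\<Sum>t<length p. z (step_coord p t) *\<^sub>R (?y (Suc t) - ?y t))) = snd (z, fpi n d f p z)"
      by (simp add: snd_sum fpi_eq_sum_lessThan mult.commute)
  qed
  finally show ?thesis .
qed

lemma staircase_weight_Suc_le:
  assumes p: "p \<in> staircases n d" and z: "z \<in> Delta n d" "nonincreasing_along z p"
    and t: "t \<le> length p"
  shows "staircase_weight z p (Suc t) \<le> staircase_weight z p t"
proof -
  have bounds: "0 \<le> z (step_coord p s) \<and> z (step_coord p s) \<le> 1" if "s < length p" for s
    using Delta_bounds[OF z(1) step_coord_in_coords[OF p that]] .
  consider "t = 0" | "t = length p" "t \<noteq> 0" | s where "t = Suc s" "Suc s < length p"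
    using t by (metis le_neq_implies_less not0_implies_Suc)
  then show ?thesis
  proof cases
    case 1
    then show ?thesis
      using bounds[of 0] by (auto simp: staircase_weight_def Suc_le_eq)
  next
    case 2
    then show ?thesis
      using bounds[of "t - 1"] by (simp add: staircase_weight_def)
  next
    case 3
    then show ?thesis
      using z(2) by (simp add: staircase_weight_def nonincreasing_along_def)
  qed
qed

lemma graph_point_in_convex_hull:
  assumes p: "p \<in> staircases n d" and z: "z \<in> Delta n d" "nonincreasing_along z p"
  shows "(z, fpi n d f p z) \<in> convex hull {(x, f x) | x. x \<in> vert n d}"
proof -
  let ?w = "staircase_weight z p"
  have vanish: "q \<notin> coords n d \<Longrightarrow> z q = 0" for q
    using z(1) by (cases q) (simp add: Delta_def)
  have "(\<Sum>t\<le>length p. (?w t - ?w (Suc t)) *\<^sub>R (vtx n d (jpt p t), alpha n d f (jpt p t)))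
      \<in> convex hull {(x, f x) | x. x \<in> vert n d}"
  proof (rule convex_sum)
    show "(\<Sum>t\<le>length p. ?w t - ?w (Suc t)) = 1"
      by (simp only: sum_telescope) (simp add: staircase_weight_def)
    show "0 \<le> ?w t - ?w (Suc t)" if "t \<in> {..length p}" for t
      using staircase_weight_Suc_le[OF p z] that by simp
    show "(vtx n d (jpt p t), alpha n d f (jpt p t)) \<in> convex hull {(x, f x) | x. x \<in> vert n d}" for t
    proof (rule hull_inc)
      have "vtx n d (jpt p t) \<in> vert n d"
        using jpt_in_grid[OF p] by (simp add: vert_def)
      then show "(vtx n d (jpt p t), alpha n d f (jpt p t)) \<in> {(x, f x) | x. x \<in> vert n d}"
        unfolding alpha_def by blast
    qed
  qed simp_all
  then show ?thesis
    using staircase_combination[where z = z and f = f, OF p vanish] by simp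
qed

lemma convex_hull_hypograph_supermodular:
  assumes sm: "supermodular_on_vert n d f"
  shows "convex hull {(z, \<mu>). z \<in> vert n d \<and> \<mu> \<le> f z}
    = {(z, \<mu>). z \<in> Delta n d \<and> (\<forall>p\<in>staircases n d. \<mu> \<le> fpi n d f p z)}"
    (is "convex hull ?H = ?R")
proof
  have "?H \<subseteq> ?R"
  proof clarify
    fix z \<mu>
    assume "z \<in> vert n d" "\<mu> \<le> f z"
    then obtain j where j: "j \<in> grid n d" "z = vtx n d j"
      by (auto simp: vert_def)
    have "\<mu> \<le> fpi n d f p z" if "p \<in> staircases n d" for p
      using supermodular_le_fpi[OF sm that j(1)] \<open>\<mu> \<le> f z\<close> j(2) by simp
    then show "z \<in> Delta n d \<and> (\<forall>p\<in>staircases n d. \<mu> \<le> fpi n d f p z)"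
      using vtx_in_Delta j(2) by blast
  qed
  then show "convex hull ?H \<subseteq> ?R"
    by (rule hull_minimal) (rule convex_fpi_hypograph)
  show "?R \<subseteq> convex hull ?H"
  proof clarify
    fix z \<mu>
    assume z: "z \<in> Delta n d" and \<mu>: "\<forall>p\<in>staircases n d. \<mu> \<le> fpi n d f p z"
    have "z (i, Suc k) \<le> z (i, k)" if "i < n" "1 \<le> k" "k < d i" for i k
      using z that by (simp add: Delta_def)
    then obtain p where p: "p \<in> staircases n d" "nonincreasing_along z p"
      using exists_nonincreasing_staircase by blast
    have "{(x, f x) | x. x \<in> vert n d} \<subseteq> ?H"
      by auto
    then have "(z, fpi n d f p z) \<in> convex hull ?H"
      using graph_point_in_convex_hull[OF p(1) z p(2)] hull_mono by blast
    then show "(z, \<mu>) \<in> convex hull ?H"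
      by (rule convex_hull_down_closed) (use \<mu> p in auto)
  qed
qed

lemma convex_hull_epigraph_submodular:
  assumes "submodular_on_vert n d f"
  shows "convex hull {(z, \<mu>). z \<in> vert n d \<and> f z \<le> \<mu>}
    = {(z, \<mu>). z \<in> Delta n d \<and> (\<forall>p\<in>staircases n d. fpi n d f p z \<le> \<mu>)}"
proof -
  let ?neg = "\<lambda>(z, \<mu>). (z :: nat \<times> nat \<Rightarrow> real, - \<mu> :: real)"
  have super: "supermodular_on_vert n d (\<lambda>z. - f z)"
    unfolding supermodular_on_vert_def
  proof (intro ballI)
    fix u w
    assume "u \<in> vert n d" "w \<in> vert n d"
    with assms have "f (sup u w) + f (inf u w) \<le> f u + f w"
      by (simp add: submodular_on_vert_def)
    then show "- f u + - f w \<le> - f (sup u w) + - f (inf u w)"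
      by linarith
  qed
  have "convex hull {(z, \<mu>). z \<in> vert n d \<and> f z \<le> \<mu>}
      = convex hull (?neg ` {(z, \<mu>). z \<in> vert n d \<and> \<mu> \<le> - f z})"
    by (simp add: image_negate_snd)
  also have "\<dots> = ?neg ` (convex hull {(z, \<mu>). z \<in> vert n d \<and> \<mu> \<le> - f z})"
    by (rule convex_hull_linear_image[OF linear_negate_snd, symmetric])
  also have "\<dots> = ?neg ` {(z, \<mu>). z \<in> Delta n d \<and> (\<forall>p\<in>staircases n d. \<mu> \<le> fpi n d (\<lambda>z. - f z) p z)}"
    by (simp only: convex_hull_hypograph_supermodular[OF super])
  also have "\<dots> = {(z, \<mu>). z \<in> Delta n d \<and> (\<forall>p\<in>staircases n d. fpi n d f p z \<le> \<mu>)}"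
    by (simp add: image_negate_snd fpi_uminus)
  finally show ?thesis .
qed

theorem mainTheorem12:
  fixes n :: nat and d :: "nat \<Rightarrow> nat" and f :: "(nat \<times> nat \<Rightarrow> real) \<Rightarrow> real"
  assumes "\<forall>i<n. d i \<ge> 1"
  shows "(supermodular_on_vert n d f \<longrightarrow>
           convex hull {(z, \<mu>). z \<in> vert n d \<and> \<mu> \<le> f z} =
           {(z, \<mu>). z \<in> Delta n d \<and> (\<forall>p\<in>staircases n d. \<mu> \<le> fpi n d f p z)})
       \<and> (submodular_on_vert n d f \<longrightarrow>
           convex hull {(z, \<mu>). z \<in> vert n d \<and> \<mu> \<ge> f z} =
           {(z, \<mu>). z \<in> Delta n d \<and> (\<forall>p\<in>staircases n d. \<mu> \<ge> fpi n d f p z)})"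
  using convex_hull_hypograph_supermodular convex_hull_epigraph_submodular by blast

end
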